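(* Let $\sigma>0$, $\bar\gamma>0$, $c_\infty\ge0$, and let $\kappa:[0,\infty)\to\mathbb{R}$ be $L_\kappa$-Lipschitz with $\kappa(0)=0$; set $\tau_\gamma(w)=w+\gamma\kappa(w)$. Let $(\gamma_n)\subset(0,\bar\gamma]$ with $\gamma_n\to0$, $w_0\ge0$, and let $(W^{(n)}_k)_{k\in\mathbb{N}}$ be the Markov chain with $W^{(n)}_0=w_0$ and kernel $Q_{\gamma_n}$, where $$Q_\gamma(w,A)=\delta_0(A)\int_{\mathbb{R}}\bar p_{\sigma^2\gamma}(\tau_\gamma(w)+\gamma c_\infty,g)\varphi(g)dg+\int_{\mathbb{R}}\mathbb{1}_A(\tau_\gamma(w)+\gamma c_\infty-2\sigma\gamma^{1/2}g)\{1-\bar p_{\sigma^2\gamma}(\tau_\gamma(w)+\gamma c_\infty,g)\}\varphi(g)dg,$$ $\bar p_{\sigma^2\gamma}(a,g)=1\wedge\varphi_{\sigma^2\gamma}(a-\sigma\sqrt\gamma g)/\varphi_{\sigma^2\gamma}(\sigma\sqrt\gamma g)$. Let $\mathbf W^{(n)}_t=W^{(n)}_{\lfloor t/\gamma_n\rfloor}+\{W^{(n)}_{\lceil t/\gamma_n\rceil}-W^{(n)}_{\lfloor t/\gamma_n\rfloor}\}\{t/\gamma_n-\lfloor t/\gamma_n\rfloor\}$. Then for every $T\ge0$ there exists $C_T\ge0$ such that $$\sup_{n\in\mathbb{N}}\mathbb{E}\Big[\sup_{t\in[0,T]}\{\mathbf W^{(n)}_t\}^4\Big]\le C_T.$$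
   Context: $\varphi$ is the standard normal density and $\varphi_s(t)=(2\pi s)^{-1/2}e^{-t^2/(2s)}$. *)

theory Defs
  imports "HOL-Probability.Probability"
begin

definition phi_var :: "real \<Rightarrow> real \<Rightarrow> real" where
  "phi_var s t = exp (- t\<^sup>2 / (2 * s)) / sqrt (2 * pi * s)"

definition pbar :: "real \<Rightarrow> real \<Rightarrow> real \<Rightarrow> real \<Rightarrow> real" where
  "pbar \<sigma> \<gamma> a g =
     min 1 (phi_var (\<sigma>\<^sup>2 * \<gamma>) (a - \<sigma> * sqrt \<gamma> * g) / phi_var (\<sigma>\<^sup>2 * \<gamma>) (\<sigma> * sqrt \<gamma> * g))"

text \<open>tau_gamma(w) = w + gamma kappa(w). kappa is only given on [0,oo); we evaluate it at
  max 0 w, which agrees with kappa(w) for every w >= 0 (the state space of the chain).\<close>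
definition tau :: "(real \<Rightarrow> real) \<Rightarrow> real \<Rightarrow> real \<Rightarrow> real" where
  "tau \<kappa> \<gamma> w = w + \<gamma> * \<kappa> (max 0 w)"

text \<open>Its measure of A is exactly the formula of the paper.\<close>
definition Qker :: "real \<Rightarrow> real \<Rightarrow> (real \<Rightarrow> real) \<Rightarrow> real \<Rightarrow> real \<Rightarrow> real measure" where
  "Qker \<sigma> cinf \<kappa> \<gamma> w =
     (let a = tau \<kappa> \<gamma> w + \<gamma> * cinf in
      std_normal_distribution \<bind> (\<lambda>g.
        measure_pmf (bernoulli_pmf (pbar \<sigma> \<gamma> a g)) \<bind> (\<lambda>b.
          return borel (if b then 0 else a - 2 * \<sigma> * sqrt \<gamma> * g))))"

text \<open>Law of the first k+1 states (W_0,...,W_k) of the Markov chain with W_0 = w0 and kernel Q,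
  as a measure on sequences nat => real (coordinates beyond k are irrelevant, kept equal to w0).\<close>
abbreviation seq_space :: "(nat \<Rightarrow> real) measure" where
  "seq_space \<equiv> Pi\<^sub>M UNIV (\<lambda>_. borel)"

primrec chain_law :: "(real \<Rightarrow> real measure) \<Rightarrow> real \<Rightarrow> nat \<Rightarrow> (nat \<Rightarrow> real) measure" where
  "chain_law Q w0 0 = return seq_space (\<lambda>_. w0)"
| "chain_law Q w0 (Suc k) =
     chain_law Q w0 k \<bind> (\<lambda>\<omega>. distr (Q (\<omega> k)) seq_space (\<lambda>y. fun_upd \<omega> (Suc k) y))"

definition interp :: "real \<Rightarrow> (nat \<Rightarrow> real) \<Rightarrow> real \<Rightarrow> real" where
  "interp \<gamma> \<omega> t =
     \<omega> (nat \<lfloor>t / \<gamma>\<rfloor>) + (\<omega> (nat \<lceil>t / \<gamma>\<rceil>) - \<omega> (nat \<lfloor>t / \<gamma>\<rfloor>)) * (t / \<gamma> - of_int \<lfloor>t / \<gamma>\<rfloor>)"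

end

theory Submission
  imports Defs
begin

text \<open>Let \<open>M\<^sub>k = max {|W\<^sub>j| | j \<le> k}\<close>. The chain is controlled by the functional
  \<open>V\<^sub>k = 3 M\<^sub>k\<^sup>4 - 4 M\<^sub>k\<^sup>3 |W\<^sub>k| + 8 W\<^sub>k\<^sup>4 + 1\<close>, which dominates \<open>M\<^sub>k\<^sup>4 + 1\<close> and does not
  increase when a jump raises the running maximum. From \<open>W\<^sub>k = w\<close> the chain moves to \<open>0\<close> or to
  \<open>a - 2 \<sigma> sqrt \<gamma> g\<close>, where \<open>a = \<tau>\<^sub>\<gamma>(w) + \<gamma> c\<^sub>\<infinity>\<close>. The reflection \<open>g \<mapsto> a / (\<sigma> sqrt \<gamma>) - g\<close>
  preserves \<open>\<phi>(g) pbar(a, g)\<close>, so the next state has mean exactly \<open>a\<close>. Hence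
  \<open>E |W\<^bsub>k+1\<^esub>| \<ge> |a|\<close>, which controls the only negative term of \<open>V\<close>, while the fourth moment
  is \<open>a\<^sup>4 + O(\<gamma>)\<close>. As \<open>|a| = |w| + O(\<gamma> (1 + |w|))\<close>, this gives
  \<open>E[V\<^bsub>k+1\<^esub> | W\<^sub>0, \<dots>, W\<^sub>k] \<le> (1 + K \<gamma>) V\<^sub>k\<close> with \<open>K\<close> uniform in \<open>\<gamma> \<le> \<gamma>bar\<close>, so
  \<open>E V\<^sub>N \<le> exp (K (T + \<gamma>bar)) V\<^sub>0\<close> for \<open>N = \<lceil>T / \<gamma>\<rceil>\<close>; finally \<open>V\<^sub>N\<close> dominates the fourth
  power of the interpolated path on \<open>[0, T]\<close>.\<close>

section \<open>The one-step kernel\<close>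

abbreviation \<phi> :: "real \<Rightarrow> real" where "\<phi> \<equiv> std_normal_density"

definition bernoulli_choice :: "real \<Rightarrow> 'a::topological_space \<Rightarrow> 'a \<Rightarrow> 'a measure" where
  "bernoulli_choice p z x = measure_pmf (bernoulli_pmf p) \<bind> (\<lambda>b. return borel (if b then z else x))"

lemma sets_bernoulli_choice: "sets (bernoulli_choice p z x) = sets borel"
  unfolding bernoulli_choice_def by (subst sets_bind) auto

lemma nn_integral_bernoulli_choice:
  assumes "0 \<le> p" "p \<le> 1" "f \<in> borel_measurable borel"
  shows "(\<integral>\<^sup>+y. f y \<partial>bernoulli_choice p z x) = ennreal p * f z + ennreal (1 - p) * f x"
proof -
  have "(\<lambda>b. return borel (if b then z else x)) \<in> measure_pmf (bernoulli_pmf p) \<rightarrow>\<^sub>M subprob_algebra borel"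
    by (subst measurable_cong_sets[OF sets_measure_pmf_count_space refl])
       (auto simp: measurable_count_space_eq1 space_subprob_algebra subprob_space_return)
  then show ?thesis
    using assms unfolding bernoulli_choice_def
    by (subst nn_integral_bind[OF assms(3)]) (simp_all add: nn_integral_return mult.commute)
qed

lemma emeasure_bernoulli_choice:
  assumes "0 \<le> p" "p \<le> 1" "A \<in> sets borel"
  shows "emeasure (bernoulli_choice p z x) A = ennreal p * indicator A z + ennreal (1 - p) * indicator A x"
  using assms nn_integral_bernoulli_choice[of p "indicator A" z x]
  by (simp add: nn_integral_indicator sets_bernoulli_choice)

lemma prob_space_bernoulli_choice: "0 \<le> p \<Longrightarrow> p \<le> 1 \<Longrightarrow> prob_space (bernoulli_choice p z x)"
  by (rule prob_spaceI)
     (simp add: emeasure_bernoulli_choice sets_eq_imp_space_eq[OF sets_bernoulli_choice]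
       ennreal_plus[symmetric] del: ennreal_plus)

lemma measurable_bernoulli_choice:
  fixes z :: "'a::topological_space"
  assumes [measurable]: "p \<in> borel_measurable M" "h \<in> borel_measurable M"
    and p: "\<And>x. 0 \<le> p x \<and> p x \<le> 1"
  shows "(\<lambda>x. bernoulli_choice (p x) z (h x)) \<in> M \<rightarrow>\<^sub>M prob_algebra borel"
proof (rule measurable_prob_algebraI)
  show "prob_space (bernoulli_choice (p x) z (h x))" for x
    using p by (simp add: prob_space_bernoulli_choice)
  show "(\<lambda>x. bernoulli_choice (p x) z (h x)) \<in> M \<rightarrow>\<^sub>M subprob_algebra borel"
  proof (rule measurable_subprob_algebra)
    show "subprob_space (bernoulli_choice (p x) z (h x))" for x
      using p by (simp add: prob_space_bernoulli_choice prob_space_imp_subprob_space)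
    fix A :: "'a set" assume "A \<in> sets borel"
    then show "(\<lambda>x. emeasure (bernoulli_choice (p x) z (h x)) A) \<in> borel_measurable M"
      using p by (subst emeasure_bernoulli_choice) auto
  qed (rule sets_bernoulli_choice)
qed

lemma pbar_nonneg: "0 \<le> pbar \<sigma> \<gamma> a g"
  and pbar_le_1: "pbar \<sigma> \<gamma> a g \<le> 1"
  unfolding pbar_def phi_var_def by auto

lemma borel_measurable_pbar [measurable]:
  assumes [measurable]: "a \<in> borel_measurable M" "g \<in> borel_measurable M"
  shows "(\<lambda>x. pbar \<sigma> \<gamma> (a x) (g x)) \<in> borel_measurable M"
  unfolding pbar_def phi_var_def by measurable

definition step_kernel :: "real \<Rightarrow> real \<Rightarrow> real \<Rightarrow> real measure" where
  "step_kernel \<sigma> \<gamma> a = std_normal_distribution \<bind>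
     (\<lambda>g. bernoulli_choice (pbar \<sigma> \<gamma> a g) 0 (a - 2 * \<sigma> * sqrt \<gamma> * g))"

lemma Qker_eq_step_kernel: "Qker \<sigma> cinf \<kappa> \<gamma> w = step_kernel \<sigma> \<gamma> (tau \<kappa> \<gamma> w + \<gamma> * cinf)"
  unfolding Qker_def step_kernel_def bernoulli_choice_def Let_def ..

lemma measurable_step_kernel: "step_kernel \<sigma> \<gamma> \<in> borel \<rightarrow>\<^sub>M prob_algebra borel"
proof -
  have N: "std_normal_distribution \<in> space (prob_algebra borel)"
    using prob_space_normal_density[of 1 0] by (simp add: space_prob_algebra)
  have K: "(\<lambda>x. bernoulli_choice (pbar \<sigma> \<gamma> (fst x) (snd x)) 0 (fst x - 2 * \<sigma> * sqrt \<gamma> * snd x))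
      \<in> borel \<Otimes>\<^sub>M borel \<rightarrow>\<^sub>M prob_algebra borel"
    by (rule measurable_bernoulli_choice) (auto simp: pbar_nonneg pbar_le_1)
  show ?thesis
    unfolding step_kernel_def[abs_def]
    by (rule measurable_bind_prob_space2[OF measurable_const[OF N]]) (simp add: K split_beta')
qed

lemma measurable_Qker:
  assumes "continuous_on {0..} \<kappa>"
  shows "Qker \<sigma> cinf \<kappa> \<gamma> \<in> borel \<rightarrow>\<^sub>M prob_algebra borel"
proof -
  have "continuous_on UNIV (\<lambda>w. \<kappa> (max 0 w))"
    by (rule continuous_on_compose2[OF assms continuous_on_max[OF continuous_on_const continuous_on_id]]) auto
  then have [measurable]: "(\<lambda>w. \<kappa> (max 0 w)) \<in> borel_measurable borel"
    by (rule borel_measurable_continuous_onI)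
  have "(\<lambda>w. tau \<kappa> \<gamma> w + \<gamma> * cinf) \<in> borel_measurable borel"
    unfolding tau_def by measurable
  then show ?thesis
    unfolding Qker_eq_step_kernel[abs_def] by (rule measurable_compose[OF _ measurable_step_kernel])
qed

lemma nn_integral_step_kernel:
  assumes [measurable]: "f \<in> borel_measurable borel"
  shows "(\<integral>\<^sup>+y. f y \<partial>step_kernel \<sigma> \<gamma> a) =
    (\<integral>\<^sup>+g. ennreal (\<phi> g) * (ennreal (pbar \<sigma> \<gamma> a g) * f 0
       + ennreal (1 - pbar \<sigma> \<gamma> a g) * f (a - 2 * \<sigma> * sqrt \<gamma> * g)) \<partial>lborel)"
proof -
  have "(\<lambda>g. bernoulli_choice (pbar \<sigma> \<gamma> a g) 0 (a - 2 * \<sigma> * sqrt \<gamma> * g))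
      \<in> std_normal_distribution \<rightarrow>\<^sub>M subprob_algebra borel"
    by (intro measurable_prob_algebraD measurable_bernoulli_choice) (auto simp: pbar_nonneg pbar_le_1)
  then show ?thesis
    unfolding step_kernel_def
    by (simp add: nn_integral_bind[OF assms] nn_integral_density nn_integral_bernoulli_choice
        pbar_nonneg pbar_le_1)
qed

section \<open>Gaussian moments and the reflection symmetry\<close>

lemma integrable_bounded_mult:
  fixes f P :: "'a \<Rightarrow> real"
  assumes "integrable M f" "P \<in> borel_measurable M" "\<And>x. \<bar>P x\<bar> \<le> 1"
  shows "integrable M (\<lambda>x. P x * f x)"
proof (rule Bochner_Integration.integrable_bound[OF assms(1)])
  show "AE x in M. norm (P x * f x) \<le> norm (f x)"
    using assms(3) by (auto simp: abs_mult intro!: mult_left_le_one_le)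
qed (use assms in measurable)

lemma integrable_std_normal_affine_power: "integrable lborel (\<lambda>g. \<phi> g * (a - c * g) ^ k)"
proof -
  have "\<phi> g * (a - c * g) ^ k = (\<Sum>i\<le>k. (of_nat (k choose i) * (- c) ^ i * a ^ (k - i)) * (\<phi> g * g ^ i))"
    for g
  proof -
    have "(- (c * g)) ^ i = (- c) ^ i * g ^ i" for i
      by (metis mult_minus_left power_mult_distrib)
    then show ?thesis
      using binomial_ring[of "- (c * g)" a k] by (simp add: sum_distrib_left ac_simps)
  qed
  moreover have "integrable lborel
      (\<lambda>g. \<Sum>i\<le>k. (of_nat (k choose i) * (- c) ^ i * a ^ (k - i)) * (\<phi> g * g ^ i))"
    by (intro Bochner_Integration.integrable_sum Bochner_Integration.integrable_mult_right integrable_std_normal_moment)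
  ultimately show ?thesis by simp
qed

lemma integral_std_normal_affine: "(\<integral>g. \<phi> g * (a - c * g) \<partial>lborel) = a"
proof -
  have "(\<integral>g. \<phi> g * (a - c * g) \<partial>lborel)
      = (\<integral>g. a * (\<phi> g * g ^ (2 * 0)) - c * (\<phi> g * g ^ (2 * 0 + 1)) \<partial>lborel)"
    by (simp add: algebra_simps)
  also have "\<dots> = a"
    by (simp only: Bochner_Integration.integral_diff Bochner_Integration.integral_mult_right
        Bochner_Integration.integrable_mult_right integrable_std_normal_moment
        integral_std_normal_moment_even integral_std_normal_moment_odd) simp
  finally show ?thesis .
qed

lemma integral_std_normal_affine_power4:
  "(\<integral>g. \<phi> g * (a - c * g) ^ 4 \<partial>lborel) = a ^ 4 + 6 * a\<^sup>2 * c\<^sup>2 + 3 * c ^ 4"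
proof -
  have "(a - c * g) ^ 4 = a ^ 4 * g ^ (2 * 0) - 4 * a ^ 3 * c * g ^ (2 * 0 + 1)
      + 6 * a\<^sup>2 * c\<^sup>2 * g ^ (2 * 1) - 4 * a * c ^ 3 * g ^ (2 * 1 + 1) + c ^ 4 * g ^ (2 * 2)" for g
    by (simp add: algebra_simps power2_eq_square power4_eq_xxxx power3_eq_cube)
  then have "(\<integral>g. \<phi> g * (a - c * g) ^ 4 \<partial>lborel) =
      (\<integral>g. a ^ 4 * (\<phi> g * g ^ (2 * 0)) - 4 * a ^ 3 * c * (\<phi> g * g ^ (2 * 0 + 1))
        + 6 * a\<^sup>2 * c\<^sup>2 * (\<phi> g * g ^ (2 * 1)) - 4 * a * c ^ 3 * (\<phi> g * g ^ (2 * 1 + 1))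
        + c ^ 4 * (\<phi> g * g ^ (2 * 2)) \<partial>lborel)"
    by (simp only:) (simp add: algebra_simps)
  also have "\<dots> = a ^ 4 + 6 * a\<^sup>2 * c\<^sup>2 + 3 * c ^ 4"
    by (simp only: Bochner_Integration.integral_diff Bochner_Integration.integral_add
        Bochner_Integration.integral_mult_right Bochner_Integration.integrable_diff
        Bochner_Integration.integrable_add Bochner_Integration.integrable_mult_right
        integrable_std_normal_moment integral_std_normal_moment_even integral_std_normal_moment_odd)
       (simp add: fact_numeral)
  finally show ?thesis .
qed

lemma integrable_rejected_affine_power:
  "integrable lborel (\<lambda>g. \<phi> g * (1 - pbar \<sigma> \<gamma> a g) * (a - c * g) ^ k)"
  using integrable_bounded_mult[OF integrable_std_normal_affine_power[of a c k],
      of "\<lambda>g. 1 - pbar \<sigma> \<gamma> a g"]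
  by (simp add: pbar_nonneg pbar_le_1 ac_simps)

lemma integrable_rejected_affine_abs:
  "integrable lborel (\<lambda>g. \<phi> g * (1 - pbar \<sigma> \<gamma> a g) * \<bar>a - c * g\<bar>)"
  using integrable_bounded_mult[OF Bochner_Integration.integrable_abs
      [OF integrable_std_normal_affine_power[of a c 1]], of "\<lambda>g. 1 - pbar \<sigma> \<gamma> a g"]
  by (simp add: pbar_nonneg pbar_le_1 abs_mult normal_density_nonneg ac_simps)

lemma std_normal_density_mult_pbar:
  assumes "\<sigma> > 0" "\<gamma> > 0"
  shows "\<phi> g * pbar \<sigma> \<gamma> a g = min (\<phi> g) (\<phi> (a / (\<sigma> * sqrt \<gamma>) - g))"
proof -
  define s where "s = \<sigma> * sqrt \<gamma>"
  have s: "s > 0" and s2: "\<sigma>\<^sup>2 * \<gamma> = s\<^sup>2"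
    using assms by (simp_all add: s_def power_mult_distrib)
  have "(a / s - g)\<^sup>2 / 2 = (a - s * g)\<^sup>2 / (2 * s\<^sup>2)"
    using s by (simp add: field_simps power2_eq_square)
  then have "\<phi> g * (phi_var (s\<^sup>2) (a - s * g) / phi_var (s\<^sup>2) (s * g)) = \<phi> (a / s - g)"
    using s by (simp add: phi_var_def std_normal_density_def power_mult_distrib field_simps)
  then show ?thesis
    unfolding pbar_def s2 s_def[symmetric]
    by (simp add: min_mult_distrib_left normal_density_pos less_imp_le)
qed

lemma integral_rejected_affine:
  assumes "\<sigma> > 0" "\<gamma> > 0"
  shows "(\<integral>g. \<phi> g * (1 - pbar \<sigma> \<gamma> a g) * (a - 2 * \<sigma> * sqrt \<gamma> * g) \<partial>lborel) = a"
proof -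
  define s where "s = \<sigma> * sqrt \<gamma>"
  have s: "s > 0" using assms by (simp add: s_def)
  define f where "f g = pbar \<sigma> \<gamma> a g * (\<phi> g * (a - 2 * s * g))" for g
  have f_reflect: "f (a / s + (-1) * g) = - f g" for g
  proof -
    have "\<phi> (a / s - g) * pbar \<sigma> \<gamma> a (a / s - g) = \<phi> g * pbar \<sigma> \<gamma> a g"
      using std_normal_density_mult_pbar[OF assms] by (simp add: s_def min.commute)
    moreover have "a - 2 * s * (a / s - g) = - (a - 2 * s * g)"
      using s by (simp add: field_simps)
    ultimately show ?thesis
      unfolding f_def by (simp add: algebra_simps)
  qed
  have "(\<integral>g. f g \<partial>lborel) = (\<integral>g. f (a / s + (-1) * g) \<partial>lborel)"
    using lborel_integral_real_affine[of "-1" f "a / s"] by simp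
  also have "\<dots> = - (\<integral>g. f g \<partial>lborel)"
    by (simp only: f_reflect Bochner_Integration.integral_minus)
  finally have f0: "(\<integral>g. f g \<partial>lborel) = 0" by simp
  have "integrable lborel f"
    using integrable_bounded_mult[OF integrable_std_normal_affine_power[of a "2 * s" 1], of "pbar \<sigma> \<gamma> a"]
    unfolding f_def[abs_def] by (simp add: pbar_nonneg pbar_le_1)
  then have "(\<integral>g. \<phi> g * (1 - pbar \<sigma> \<gamma> a g) * (a - 2 * s * g) \<partial>lborel)
      = (\<integral>g. \<phi> g * (a - 2 * s * g) \<partial>lborel) - (\<integral>g. f g \<partial>lborel)"
    using integrable_std_normal_affine_power[of a "2 * s" 1]
    by (subst Bochner_Integration.integral_diff[symmetric]) (auto simp: f_def algebra_simps)
  then show ?thesis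
    using integral_std_normal_affine[of a "2 * s"] by (simp add: f0 s_def mult.assoc)
qed

lemma abs_le_integral_rejected_abs:
  assumes "\<sigma> > 0" "\<gamma> > 0"
  shows "\<bar>a\<bar> \<le> (\<integral>g. \<phi> g * (1 - pbar \<sigma> \<gamma> a g) * \<bar>a - 2 * \<sigma> * sqrt \<gamma> * g\<bar> \<partial>lborel)"
proof -
  have "\<bar>\<phi> g * (1 - pbar \<sigma> \<gamma> a g) * (a - 2 * \<sigma> * sqrt \<gamma> * g)\<bar>
      = \<phi> g * (1 - pbar \<sigma> \<gamma> a g) * \<bar>a - 2 * \<sigma> * sqrt \<gamma> * g\<bar>" for g
    by (simp add: abs_mult pbar_le_1 normal_density_nonneg)
  then show ?thesis
    using integral_abs_bound[of lborel "\<lambda>g. \<phi> g * (1 - pbar \<sigma> \<gamma> a g) * (a - 2 * \<sigma> * sqrt \<gamma> * g)"]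
    by (simp only: integral_rejected_affine[OF assms])
qed

lemma integral_rejected_power4_le:
  "(\<integral>g. \<phi> g * (1 - pbar \<sigma> \<gamma> a g) * (a - c * g) ^ 4 \<partial>lborel) \<le> a ^ 4 + 6 * a\<^sup>2 * c\<^sup>2 + 3 * c ^ 4"
proof -
  have "\<phi> g * (1 - pbar \<sigma> \<gamma> a g) * (a - c * g) ^ 4 \<le> \<phi> g * (a - c * g) ^ 4" for g
    using mult_left_le_one_le[of "\<phi> g * (a - c * g) ^ 4" "1 - pbar \<sigma> \<gamma> a g"]
    by (simp add: pbar_nonneg pbar_le_1 normal_density_nonneg ac_simps)
  then have "(\<integral>g. \<phi> g * (1 - pbar \<sigma> \<gamma> a g) * (a - c * g) ^ 4 \<partial>lborel)
      \<le> (\<integral>g. \<phi> g * (a - c * g) ^ 4 \<partial>lborel)"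
    by (intro integral_mono integrable_rejected_affine_power integrable_std_normal_affine_power)
  then show ?thesis
    by (simp only: integral_std_normal_affine_power4)
qed

lemma nn_integral_step_kernel_eq_integral:
  assumes [measurable]: "f \<in> borel_measurable borel" and f: "\<And>y. 0 \<le> f y"
    and "integrable lborel (\<lambda>g. \<phi> g * (1 - pbar \<sigma> \<gamma> a g) * f (a - 2 * \<sigma> * sqrt \<gamma> * g))"
  shows "(\<integral>\<^sup>+y. f y \<partial>step_kernel \<sigma> \<gamma> a) = ennreal (\<integral>g. \<phi> g * (pbar \<sigma> \<gamma> a g * f 0
    + (1 - pbar \<sigma> \<gamma> a g) * f (a - 2 * \<sigma> * sqrt \<gamma> * g)) \<partial>lborel)"
proof -
  define F where "F g = \<phi> g * (pbar \<sigma> \<gamma> a g * f 0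
    + (1 - pbar \<sigma> \<gamma> a g) * f (a - 2 * \<sigma> * sqrt \<gamma> * g))" for g
  have F_nonneg: "0 \<le> F g" for g
    unfolding F_def using f pbar_nonneg pbar_le_1
    by (intro mult_nonneg_nonneg add_nonneg_nonneg) (auto simp: normal_density_nonneg)
  have "integrable lborel (\<lambda>g. pbar \<sigma> \<gamma> a g * \<phi> g)"
    using integrable_bounded_mult[OF integrable_std_normal_affine_power[of 1 0 0], of "pbar \<sigma> \<gamma> a"]
    by (simp add: pbar_nonneg pbar_le_1)
  then have "integrable lborel F"
    using assms(3) unfolding F_def by (simp add: distrib_left ac_simps)
  have "(\<integral>\<^sup>+y. f y \<partial>step_kernel \<sigma> \<gamma> a) = (\<integral>\<^sup>+g. F g \<partial>lborel)"
    using f pbar_nonneg pbar_le_1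
    by (simp add: nn_integral_step_kernel F_def ennreal_mult normal_density_nonneg)
  also have "\<dots> = ennreal (\<integral>g. F g \<partial>lborel)"
    using \<open>integrable lborel F\<close> F_nonneg by (intro nn_integral_eq_integral) auto
  finally show ?thesis
    unfolding F_def .
qed

section \<open>The Lyapunov functional\<close>

definition lyapunov :: "real \<Rightarrow> real \<Rightarrow> real" where
  "lyapunov M u = 3 * M ^ 4 - 4 * M ^ 3 * u + 8 * u ^ 4 + 1"

lemma lyapunov_lower: "M ^ 4 + 1 \<le> lyapunov M u"
proof -
  have "2 * M ^ 4 - 4 * M ^ 3 * u + 8 * u ^ 4
      = 2 * (M\<^sup>2 - M * u - u\<^sup>2)\<^sup>2 + 2 * u\<^sup>2 * (M - u)\<^sup>2 + 4 * u ^ 4"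
    by (simp add: algebra_simps power2_eq_square power4_eq_xxxx power3_eq_cube)
  moreover have "0 \<le> 2 * (M\<^sup>2 - M * u - u\<^sup>2)\<^sup>2 + 2 * u\<^sup>2 * (M - u)\<^sup>2 + 4 * u ^ 4"
    by simp
  ultimately show ?thesis
    unfolding lyapunov_def by linarith
qed

lemma lyapunov_pos: "0 < lyapunov M u"
proof -
  have "0 \<le> M ^ 4"
    by simp
  then show ?thesis
    using lyapunov_lower[of M u] by linarith
qed

lemma lyapunov_max_le:
  assumes "0 \<le> M" "0 \<le> v"
  shows "lyapunov (max M v) v \<le> lyapunov M v"
proof (cases "v \<le> M")
  case False
  have "3 * M ^ 4 - 4 * M ^ 3 * v + v ^ 4 = (v - M)\<^sup>2 * (v\<^sup>2 + 2 * v * M + 3 * M\<^sup>2)"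
    by (simp add: algebra_simps power2_eq_square power4_eq_xxxx power3_eq_cube)
  moreover have "0 \<le> (v - M)\<^sup>2 * (v\<^sup>2 + 2 * v * M + 3 * M\<^sup>2)"
    using assms by simp
  ultimately show ?thesis
    using False by (simp add: lyapunov_def max_def power4_eq_xxxx power3_eq_cube)
qed (simp add: max_def)

lemma nn_integral_lyapunov_step_kernel_eq:
  "(\<integral>\<^sup>+y. lyapunov M \<bar>y\<bar> \<partial>step_kernel \<sigma> \<gamma> a) = ennreal (3 * M ^ 4 + 1
    - 4 * M ^ 3 * (\<integral>g. \<phi> g * (1 - pbar \<sigma> \<gamma> a g) * \<bar>a - 2 * \<sigma> * sqrt \<gamma> * g\<bar> \<partial>lborel)
    + 8 * (\<integral>g. \<phi> g * (1 - pbar \<sigma> \<gamma> a g) * (a - 2 * \<sigma> * sqrt \<gamma> * g) ^ 4 \<partial>lborel))"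
proof -
  define c where "c = 2 * \<sigma> * sqrt \<gamma>"
  have int0: "integrable lborel (\<lambda>g. \<phi> g * (1 - pbar \<sigma> \<gamma> a g) * (a - c * g) ^ 0)"
    and int1: "integrable lborel (\<lambda>g. \<phi> g * (1 - pbar \<sigma> \<gamma> a g) * \<bar>a - c * g\<bar>)"
    and int4: "integrable lborel (\<lambda>g. \<phi> g * (1 - pbar \<sigma> \<gamma> a g) * (a - c * g) ^ 4)"
    by (rule integrable_rejected_affine_power integrable_rejected_affine_abs)+
  have "\<phi> g * (1 - pbar \<sigma> \<gamma> a g) * lyapunov M \<bar>a - c * g\<bar>
      = (3 * M ^ 4 + 1) * (\<phi> g * (1 - pbar \<sigma> \<gamma> a g) * (a - c * g) ^ 0)
        - 4 * M ^ 3 * (\<phi> g * (1 - pbar \<sigma> \<gamma> a g) * \<bar>a - c * g\<bar>)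
        + 8 * (\<phi> g * (1 - pbar \<sigma> \<gamma> a g) * (a - c * g) ^ 4)" for g
    by (simp add: lyapunov_def algebra_simps power_even_abs_numeral)
  then have "integrable lborel (\<lambda>g. \<phi> g * (1 - pbar \<sigma> \<gamma> a g) * lyapunov M \<bar>a - c * g\<bar>)"
    using int0 int1 int4 by simp
  moreover have "(\<lambda>y. lyapunov M \<bar>y\<bar>) \<in> borel_measurable borel"
    unfolding lyapunov_def by measurable
  ultimately have eq: "(\<integral>\<^sup>+y. lyapunov M \<bar>y\<bar> \<partial>step_kernel \<sigma> \<gamma> a)
      = ennreal (\<integral>g. \<phi> g * (pbar \<sigma> \<gamma> a g * lyapunov M 0
          + (1 - pbar \<sigma> \<gamma> a g) * lyapunov M \<bar>a - c * g\<bar>) \<partial>lborel)"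
    using nn_integral_step_kernel_eq_integral[where f = "\<lambda>y. lyapunov M \<bar>y\<bar>" and \<sigma> = \<sigma> and \<gamma> = \<gamma> and a = a]
    by (simp add: c_def lyapunov_pos less_imp_le)
  have F_linear: "\<phi> g * (pbar \<sigma> \<gamma> a g * lyapunov M 0 + (1 - pbar \<sigma> \<gamma> a g) * lyapunov M \<bar>a - c * g\<bar>)
      = (3 * M ^ 4 + 1) * \<phi> g - 4 * M ^ 3 * (\<phi> g * (1 - pbar \<sigma> \<gamma> a g) * \<bar>a - c * g\<bar>)
        + 8 * (\<phi> g * (1 - pbar \<sigma> \<gamma> a g) * (a - c * g) ^ 4)" for g
    by (simp add: lyapunov_def algebra_simps power_even_abs_numeral)
  show ?thesis
    unfolding c_def[symmetric] eq F_linear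
    using integrable_std_normal_affine_power[of 1 0 0] integral_std_normal_affine[of 1 0] int1 int4
    by simp
qed

lemma nn_integral_lyapunov_step_kernel:
  assumes "\<sigma> > 0" "\<gamma> > 0" "M \<ge> 0"
  shows "(\<integral>\<^sup>+y. lyapunov M \<bar>y\<bar> \<partial>step_kernel \<sigma> \<gamma> a)
    \<le> ennreal (lyapunov M \<bar>a\<bar> + 192 * (\<sigma>\<^sup>2 * \<gamma>) * a\<^sup>2 + 384 * (\<sigma>\<^sup>2 * \<gamma>)\<^sup>2)"
proof -
  define c where "c = 2 * \<sigma> * sqrt \<gamma>"
  have "(\<integral>\<^sup>+y. lyapunov M \<bar>y\<bar> \<partial>step_kernel \<sigma> \<gamma> a)
      \<le> ennreal (3 * M ^ 4 + 1 - 4 * M ^ 3 * \<bar>a\<bar> + 8 * (a ^ 4 + 6 * a\<^sup>2 * c\<^sup>2 + 3 * c ^ 4))"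
    unfolding nn_integral_lyapunov_step_kernel_eq
    using abs_le_integral_rejected_abs[OF assms(1,2), of a] integral_rejected_power4_le[of \<sigma> \<gamma> a c]
      \<open>M \<ge> 0\<close> unfolding c_def
    by (intro ennreal_leI add_mono diff_mono mult_left_mono order_refl) auto
  also have "3 * M ^ 4 + 1 - 4 * M ^ 3 * \<bar>a\<bar> + 8 * (a ^ 4 + 6 * a\<^sup>2 * c\<^sup>2 + 3 * c ^ 4)
      = lyapunov M \<bar>a\<bar> + 192 * (\<sigma>\<^sup>2 * \<gamma>) * a\<^sup>2 + 384 * (\<sigma>\<^sup>2 * \<gamma>)\<^sup>2"
  proof -
    have c2: "c\<^sup>2 = 4 * (\<sigma>\<^sup>2 * \<gamma>)"
      using \<open>\<gamma> > 0\<close> by (simp add: c_def power_mult_distrib)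
    then have "c ^ 4 = 16 * (\<sigma>\<^sup>2 * \<gamma>)\<^sup>2"
      using power_mult[of c 2 2] by simp
    with c2 show ?thesis
      by (simp add: lyapunov_def power_even_abs_numeral algebra_simps)
  qed
  finally show ?thesis .
qed

lemma abs_power_diff_le:
  fixes x u R :: real
  assumes "\<bar>x\<bar> \<le> R" "\<bar>u\<bar> \<le> R"
  shows "\<bar>x ^ n - u ^ n\<bar> \<le> n * R ^ (n - 1) * \<bar>x - u\<bar>"
proof (cases "R = 0 \<or> n = 0")
  case True
  then show ?thesis
    using assms by (cases "n = 0") auto
next
  case False
  then have R: "R > 0" and n: "n \<ge> 1"
    using assms by auto
  have "\<bar>(x / R) ^ n - (u / R) ^ n\<bar> \<le> n * \<bar>x / R - u / R\<bar>"
    using norm_power_diff[of "x / R" "u / R" n] assms R by simp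
  then have "R ^ n * \<bar>(x / R) ^ n - (u / R) ^ n\<bar> \<le> R ^ n * (n * \<bar>x / R - u / R\<bar>)"
    using R by (intro mult_left_mono) auto
  moreover have "R ^ n = R ^ (n - 1) * R"
    using n by (simp add: power_eq_if)
  ultimately show ?thesis
    using R by (simp add: power_divide abs_mult diff_divide_distrib[symmetric] field_simps)
qed

lemma one_plus_power4_le:
  fixes M :: real
  assumes "0 \<le> M"
  shows "(1 + M) ^ 4 \<le> 16 * (1 + M ^ 4)"
proof -
  have "(1 + M) ^ 4 \<le> (2 * max 1 M) ^ 4"
    using assms by (intro power_mono) auto
  also have "\<dots> = 16 * (max 1 M) ^ 4"
    by (simp add: power_mult_distrib)
  also have "\<dots> \<le> 16 * (1 + M ^ 4)"
    using assms by (cases "M \<le> 1") (auto simp: max_def)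
  finally show ?thesis .
qed

lemma abs_tau_shift:
  assumes "L-lipschitz_on {0..} \<kappa>" "\<kappa> 0 = 0" "0 \<le> \<gamma>" "0 \<le> c"
  shows "\<bar>\<bar>tau \<kappa> \<gamma> w + \<gamma> * c\<bar> - \<bar>w\<bar>\<bar> \<le> \<gamma> * (L * \<bar>w\<bar> + c)"
proof -
  have "\<bar>\<kappa> (max 0 w)\<bar> \<le> L * \<bar>max 0 w\<bar>"
    using lipschitz_onD[OF assms(1), of "max 0 w" 0] assms(2) by (simp add: dist_real_def)
  also have "\<dots> \<le> L * \<bar>w\<bar>"
    using lipschitz_on_nonneg[OF assms(1)] by (intro mult_left_mono) auto
  finally have "\<bar>\<gamma> * \<kappa> (max 0 w) + \<gamma> * c\<bar> \<le> \<gamma> * (L * \<bar>w\<bar> + c)"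
    using assms(3,4) by (simp add: abs_mult distrib_left abs_triangle_ineq[THEN order_trans]
        mult_left_mono add_mono)
  then show ?thesis
    unfolding tau_def by (smt (verit) abs_triangle_ineq3)
qed

definition drift_const :: "real \<Rightarrow> real \<Rightarrow> real \<Rightarrow> real \<Rightarrow> real" where
  "drift_const L c \<sigma> \<gamma>bar =
     16 * (1 + \<gamma>bar * (L + c)) ^ 4 * (36 * (L + c) + 192 * \<sigma>\<^sup>2 + 384 * \<sigma> ^ 4 * \<gamma>bar)"

lemma drift_const_nonneg: "0 \<le> L \<Longrightarrow> 0 \<le> c \<Longrightarrow> 0 \<le> \<gamma>bar \<Longrightarrow> 0 \<le> drift_const L c \<sigma> \<gamma>bar"
  unfolding drift_const_def by simp

lemma lyapunov_increment_le:
  assumes u: "0 \<le> u" "u \<le> M" and MR: "M \<le> R" and x: "0 \<le> x" "x \<le> R" and R1: "1 \<le> R"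
    and d: "\<bar>x - u\<bar> \<le> \<delta> * R" and \<gamma>: "0 \<le> \<gamma>" "\<gamma> \<le> \<gamma>bar"
  shows "lyapunov M x + 192 * (\<sigma>\<^sup>2 * \<gamma>) * x\<^sup>2 + 384 * (\<sigma>\<^sup>2 * \<gamma>)\<^sup>2
    \<le> lyapunov M u + (36 * \<delta> + 192 * \<sigma>\<^sup>2 * \<gamma> + 384 * \<sigma> ^ 4 * \<gamma>bar * \<gamma>) * R ^ 4"
proof -
  have cross: "M ^ 3 * (u - x) \<le> \<delta> * R ^ 4"
  proof -
    have "M ^ 3 * (u - x) \<le> M ^ 3 * \<bar>x - u\<bar>"
      using u by (intro mult_left_mono) auto
    also have "\<dots> \<le> R ^ 3 * (\<delta> * R)"
      using d MR u by (intro mult_mono power_mono) auto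
    finally show ?thesis
      by (simp add: eval_nat_numeral ac_simps)
  qed
  have quartic: "x ^ 4 - u ^ 4 \<le> 4 * (\<delta> * R ^ 4)"
  proof -
    have "x ^ 4 - u ^ 4 \<le> 4 * R ^ 3 * \<bar>x - u\<bar>"
      using abs_power_diff_le[of x R u 4] x u MR by simp
    also have "\<dots> \<le> 4 * R ^ 3 * (\<delta> * R)"
      using d R1 by (intro mult_left_mono) auto
    finally show ?thesis
      by (simp add: eval_nat_numeral ac_simps)
  qed
  have variance: "(\<sigma>\<^sup>2 * \<gamma>) * x\<^sup>2 \<le> \<sigma>\<^sup>2 * \<gamma> * R ^ 4"
  proof -
    have "x\<^sup>2 \<le> R ^ 4"
      using power_mono[OF x(2,1), of 2] power_increasing[OF _ R1, of 2 4] by simp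
    then show ?thesis
      using \<gamma> by (simp add: mult_left_mono)
  qed
  have noise: "(\<sigma>\<^sup>2 * \<gamma>)\<^sup>2 \<le> \<sigma> ^ 4 * \<gamma>bar * \<gamma> * R ^ 4"
  proof -
    have "\<gamma> * 1 \<le> \<gamma>bar * R ^ 4"
      using \<gamma> R1 by (intro mult_mono) auto
    then have "\<sigma> ^ 4 * \<gamma> * \<gamma> \<le> \<sigma> ^ 4 * \<gamma> * (\<gamma>bar * R ^ 4)"
      using \<gamma> by (intro mult_left_mono) auto
    then show ?thesis
      by (simp add: power_mult_distrib eval_nat_numeral ac_simps)
  qed
  have "lyapunov M x + 192 * (\<sigma>\<^sup>2 * \<gamma>) * x\<^sup>2 + 384 * (\<sigma>\<^sup>2 * \<gamma>)\<^sup>2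
      = lyapunov M u + 4 * (M ^ 3 * (u - x)) + 8 * (x ^ 4 - u ^ 4)
        + 192 * ((\<sigma>\<^sup>2 * \<gamma>) * x\<^sup>2) + 384 * (\<sigma>\<^sup>2 * \<gamma>)\<^sup>2"
    by (simp add: lyapunov_def algebra_simps)
  also have "\<dots> \<le> lyapunov M u + 4 * (\<delta> * R ^ 4) + 8 * (4 * (\<delta> * R ^ 4))
      + 192 * (\<sigma>\<^sup>2 * \<gamma> * R ^ 4) + 384 * (\<sigma> ^ 4 * \<gamma>bar * \<gamma> * R ^ 4)"
    by (intro add_mono mult_left_mono order_refl cross quartic variance noise) auto
  also have "\<dots> = lyapunov M u + (36 * \<delta> + 192 * \<sigma>\<^sup>2 * \<gamma> + 384 * \<sigma> ^ 4 * \<gamma>bar * \<gamma>) * R ^ 4"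
    by (simp add: algebra_simps)
  finally show ?thesis .
qed

lemma lyapunov_perturb:
  assumes L: "0 \<le> L" and c: "0 \<le> c" and \<gamma>: "0 < \<gamma>" "\<gamma> \<le> \<gamma>bar"
    and u: "0 \<le> u" "u \<le> M" and x: "0 \<le> x" and xu: "\<bar>x - u\<bar> \<le> \<gamma> * (L * u + c)"
  shows "lyapunov M x + 192 * (\<sigma>\<^sup>2 * \<gamma>) * x\<^sup>2 + 384 * (\<sigma>\<^sup>2 * \<gamma>)\<^sup>2
    \<le> (1 + \<gamma> * drift_const L c \<sigma> \<gamma>bar) * lyapunov M u"
proof -
  define D where "D = 1 + \<gamma>bar * (L + c)"
  define R where "R = D * (1 + M)"
  define K where "K = 36 * (L + c) + 192 * \<sigma>\<^sup>2 + 384 * \<sigma> ^ 4 * \<gamma>bar"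
  have D: "1 \<le> D"
    using L c \<gamma> by (simp add: D_def)
  have PR: "1 + M \<le> R"
    using mult_right_mono[OF D, of "1 + M"] u by (simp add: R_def)
  have Lu: "L * u + c \<le> (L + c) * (1 + M)"
    using mult_left_mono[OF u(2) L] mult_nonneg_nonneg[OF order_trans[OF u] c] L
    by (simp add: algebra_simps)
  have "x \<le> M + \<gamma>bar * ((L + c) * (1 + M))"
    using xu u \<gamma> Lu L c mult_mono[OF \<gamma>(2) Lu] by auto
  then have xR: "x \<le> R"
    by (simp add: R_def D_def algebra_simps)
  have "L * u + c \<le> (L + c) * R"
    using Lu mult_left_mono[OF PR, of "L + c"] L c by linarith
  then have "\<gamma> * (L * u + c) \<le> \<gamma> * ((L + c) * R)"
    using \<gamma> by (intro mult_left_mono) auto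
  then have "\<bar>x - u\<bar> \<le> \<gamma> * (L + c) * R"
    using xu by (simp add: mult.assoc)
  then have "lyapunov M x + 192 * (\<sigma>\<^sup>2 * \<gamma>) * x\<^sup>2 + 384 * (\<sigma>\<^sup>2 * \<gamma>)\<^sup>2
      \<le> lyapunov M u + (36 * (\<gamma> * (L + c)) + 192 * \<sigma>\<^sup>2 * \<gamma> + 384 * \<sigma> ^ 4 * \<gamma>bar * \<gamma>) * R ^ 4"
    using PR u x xR \<gamma> by (intro lyapunov_increment_le) auto
  also have "\<dots> = lyapunov M u + \<gamma> * K * R ^ 4"
    by (simp add: K_def algebra_simps)
  also have "\<gamma> * K * R ^ 4 \<le> \<gamma> * K * (D ^ 4 * (16 * lyapunov M u))"
  proof -
    have "(1 + M) ^ 4 \<le> 16 * lyapunov M u"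
      using one_plus_power4_le[of M] lyapunov_lower[of M u] u by simp
    then have "R ^ 4 \<le> D ^ 4 * (16 * lyapunov M u)"
      unfolding R_def power_mult_distrib using D by (intro mult_left_mono) auto
    then show ?thesis
      using \<gamma> L c by (intro mult_left_mono) (auto simp: K_def)
  qed
  also have "\<gamma> * K * (D ^ 4 * (16 * lyapunov M u)) = \<gamma> * drift_const L c \<sigma> \<gamma>bar * lyapunov M u"
    by (simp add: drift_const_def K_def D_def)
  finally show ?thesis
    by (simp add: algebra_simps)
qed

lemma nn_integral_lyapunov_Qker:
  assumes "\<sigma> > 0" "0 < \<gamma>" "\<gamma> \<le> \<gamma>bar" "0 \<le> cinf"
    and "L-lipschitz_on {0..} \<kappa>" "\<kappa> 0 = 0" and "0 \<le> M" "\<bar>w\<bar> \<le> M"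
  shows "(\<integral>\<^sup>+y. lyapunov (max M \<bar>y\<bar>) \<bar>y\<bar> \<partial>Qker \<sigma> cinf \<kappa> \<gamma> w)
    \<le> ennreal ((1 + \<gamma> * drift_const L cinf \<sigma> \<gamma>bar) * lyapunov M \<bar>w\<bar>)"
proof -
  define a where "a = tau \<kappa> \<gamma> w + \<gamma> * cinf"
  have "(\<integral>\<^sup>+y. lyapunov (max M \<bar>y\<bar>) \<bar>y\<bar> \<partial>Qker \<sigma> cinf \<kappa> \<gamma> w)
      \<le> (\<integral>\<^sup>+y. lyapunov M \<bar>y\<bar> \<partial>step_kernel \<sigma> \<gamma> a)"
    unfolding Qker_eq_step_kernel a_def
    by (intro nn_integral_mono ennreal_leI lyapunov_max_le) (use assms in auto)
  also have "\<dots> \<le> ennreal (lyapunov M \<bar>a\<bar> + 192 * (\<sigma>\<^sup>2 * \<gamma>) * a\<^sup>2 + 384 * (\<sigma>\<^sup>2 * \<gamma>)\<^sup>2)"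
    using assms by (intro nn_integral_lyapunov_step_kernel) auto
  also have "\<dots> \<le> ennreal ((1 + \<gamma> * drift_const L cinf \<sigma> \<gamma>bar) * lyapunov M \<bar>w\<bar>)"
    using lyapunov_perturb[of L cinf \<gamma> \<gamma>bar "\<bar>w\<bar>" M "\<bar>a\<bar>" \<sigma>] abs_tau_shift[OF assms(5,6), of \<gamma> cinf w]
      lipschitz_on_nonneg[OF assms(5)] assms
    by (intro ennreal_leI) (simp add: a_def)
  finally show ?thesis .
qed

section \<open>Iterating the drift bound along the chain\<close>

primrec running_max :: "nat \<Rightarrow> (nat \<Rightarrow> real) \<Rightarrow> real" where
  "running_max 0 \<omega> = \<bar>\<omega> 0\<bar>"
| "running_max (Suc k) \<omega> = max (running_max k \<omega>) \<bar>\<omega> (Suc k)\<bar>"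

lemma running_max_nonneg: "0 \<le> running_max k \<omega>"
  by (induction k) auto

lemma abs_le_running_max: "j \<le> k \<Longrightarrow> \<bar>\<omega> j\<bar> \<le> running_max k \<omega>"
  by (induction k) (auto simp: le_Suc_eq max.coboundedI1)

lemma running_max_fun_upd: "k < j \<Longrightarrow> running_max k (fun_upd \<omega> j y) = running_max k \<omega>"
  by (induction k) auto

lemma borel_measurable_running_max [measurable]: "running_max k \<in> borel_measurable seq_space"
  by (induction k) auto

lemma measurable_chain_step:
  assumes "Q \<in> borel \<rightarrow>\<^sub>M prob_algebra borel"
  shows "(\<lambda>\<omega>. distr (Q (\<omega> k)) seq_space (\<lambda>y. fun_upd \<omega> (Suc k) y)) \<in> seq_space \<rightarrow>\<^sub>M prob_algebra seq_space"
proof (rule measurable_distr_prob_space2)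
  show "(\<lambda>\<omega>. Q (\<omega> k)) \<in> seq_space \<rightarrow>\<^sub>M prob_algebra borel"
    using assms by measurable
  show "(\<lambda>(\<omega>, y). fun_upd \<omega> (Suc k) y) \<in> seq_space \<Otimes>\<^sub>M borel \<rightarrow>\<^sub>M seq_space"
    using measurable_add_dim[of "Suc k" UNIV "\<lambda>_. borel :: real measure"] by simp
qed

lemma chain_law_in_prob_algebra:
  assumes "Q \<in> borel \<rightarrow>\<^sub>M prob_algebra borel"
  shows "chain_law Q w0 k \<in> space (prob_algebra seq_space)"
proof (induction k)
  case 0
  then show ?case
    by (simp add: space_prob_algebra prob_space_return space_PiM)
next
  case (Suc k)
  then show ?case
    using prob_space_bind'[OF Suc measurable_chain_step[OF assms]]
      sets_bind'[OF Suc measurable_chain_step[OF assms]]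
    by (simp add: space_prob_algebra)
qed

lemma nn_integral_chain_law_Suc:
  assumes Q: "Q \<in> borel \<rightarrow>\<^sub>M prob_algebra borel" and f: "f \<in> borel_measurable seq_space"
  shows "(\<integral>\<^sup>+\<omega>. f \<omega> \<partial>chain_law Q w0 (Suc k))
    = (\<integral>\<^sup>+\<omega>. (\<integral>\<^sup>+y. f (fun_upd \<omega> (Suc k) y) \<partial>Q (\<omega> k)) \<partial>chain_law Q w0 k)"
proof -
  have "sets (chain_law Q w0 k) = sets seq_space"
    using chain_law_in_prob_algebra[OF Q] by (simp add: space_prob_algebra)
  then have "(\<lambda>\<omega>. distr (Q (\<omega> k)) seq_space (\<lambda>y. fun_upd \<omega> (Suc k) y))
      \<in> chain_law Q w0 k \<rightarrow>\<^sub>M subprob_algebra seq_space"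
    using measurable_prob_algebraD[OF measurable_chain_step[OF Q]]
    by (simp cong: measurable_cong_sets)
  then have "(\<integral>\<^sup>+\<omega>. f \<omega> \<partial>chain_law Q w0 (Suc k))
      = (\<integral>\<^sup>+\<omega>. (\<integral>\<^sup>+x. f x \<partial>distr (Q (\<omega> k)) seq_space (\<lambda>y. fun_upd \<omega> (Suc k) y)) \<partial>chain_law Q w0 k)"
    by (simp add: nn_integral_bind[OF f])
  also have "\<dots> = (\<integral>\<^sup>+\<omega>. (\<integral>\<^sup>+y. f (fun_upd \<omega> (Suc k) y) \<partial>Q (\<omega> k)) \<partial>chain_law Q w0 k)"
  proof (rule nn_integral_cong)
    fix \<omega> :: "nat \<Rightarrow> real"
    have "sets (Q (\<omega> k)) = sets borel"
      using measurable_space[OF Q, of "\<omega> k"] by (simp add: space_prob_algebra)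
    then have "(\<lambda>y. fun_upd \<omega> (Suc k) y) \<in> Q (\<omega> k) \<rightarrow>\<^sub>M seq_space"
      unfolding measurable_cong_sets[OF _ refl]
      by (intro measurable_fun_upd[where J = UNIV and f = "\<lambda>_. \<omega>" and h = "\<lambda>y. y", simplified])
         (auto simp: space_PiM)
    then show "(\<integral>\<^sup>+x. f x \<partial>distr (Q (\<omega> k)) seq_space (\<lambda>y. fun_upd \<omega> (Suc k) y))
        = (\<integral>\<^sup>+y. f (fun_upd \<omega> (Suc k) y) \<partial>Q (\<omega> k))"
      by (rule nn_integral_distr) (simp add: f)
  qed
  finally show ?thesis .
qed

lemma nn_integral_chain_law_le_power:
  fixes V :: "nat \<Rightarrow> (nat \<Rightarrow> real) \<Rightarrow> ennreal"
  assumes Q: "Q \<in> borel \<rightarrow>\<^sub>M prob_algebra borel"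
    and V: "\<And>k. V k \<in> borel_measurable seq_space"
    and drift: "\<And>\<omega> k. (\<integral>\<^sup>+y. V (Suc k) (fun_upd \<omega> (Suc k) y) \<partial>Q (\<omega> k)) \<le> B * V k \<omega>"
  shows "(\<integral>\<^sup>+\<omega>. V k \<omega> \<partial>chain_law Q w0 k) \<le> B ^ k * V 0 (\<lambda>_. w0)"
proof (induction k)
  case 0
  show ?case
    using V[of 0] by (simp add: nn_integral_return space_PiM)
next
  case (Suc k)
  have "sets (chain_law Q w0 k) = sets seq_space"
    using chain_law_in_prob_algebra[OF Q] by (simp add: space_prob_algebra)
  then have [measurable]: "V k \<in> borel_measurable (chain_law Q w0 k)"
    using V by (simp cong: measurable_cong_sets)
  have "(\<integral>\<^sup>+\<omega>. V (Suc k) \<omega> \<partial>chain_law Q w0 (Suc k))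
      = (\<integral>\<^sup>+\<omega>. (\<integral>\<^sup>+y. V (Suc k) (fun_upd \<omega> (Suc k) y) \<partial>Q (\<omega> k)) \<partial>chain_law Q w0 k)"
    by (rule nn_integral_chain_law_Suc[OF Q V])
  also have "\<dots> \<le> (\<integral>\<^sup>+\<omega>. B * V k \<omega> \<partial>chain_law Q w0 k)"
    by (intro nn_integral_mono drift)
  also have "\<dots> = B * (\<integral>\<^sup>+\<omega>. V k \<omega> \<partial>chain_law Q w0 k)"
    by (rule nn_integral_cmult) measurable
  also have "\<dots> \<le> B ^ Suc k * V 0 (\<lambda>_. w0)"
    using mult_left_mono[OF Suc, of B] by (simp add: mult.assoc)
  finally show ?case .
qed

lemma nn_integral_lyapunov_chain_law:
  assumes "\<sigma> > 0" "0 < \<gamma>" "\<gamma> \<le> \<gamma>bar" "0 \<le> cinf"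
    and lip: "L-lipschitz_on {0..} \<kappa>" and "\<kappa> 0 = 0"
  shows "(\<integral>\<^sup>+\<omega>. lyapunov (running_max k \<omega>) \<bar>\<omega> k\<bar> \<partial>chain_law (Qker \<sigma> cinf \<kappa> \<gamma>) w0 k)
    \<le> ennreal ((1 + \<gamma> * drift_const L cinf \<sigma> \<gamma>bar) ^ k * lyapunov \<bar>w0\<bar> \<bar>w0\<bar>)"
proof -
  define B where "B = 1 + \<gamma> * drift_const L cinf \<sigma> \<gamma>bar"
  have B: "0 \<le> B"
    using assms lipschitz_on_nonneg[OF lip] by (simp add: B_def drift_const_nonneg)
  have drift: "(\<integral>\<^sup>+y. lyapunov (running_max (Suc k) (fun_upd \<omega> (Suc k) y)) \<bar>fun_upd \<omega> (Suc k) y (Suc k)\<bar>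
      \<partial>Qker \<sigma> cinf \<kappa> \<gamma> (\<omega> k)) \<le> ennreal B * lyapunov (running_max k \<omega>) \<bar>\<omega> k\<bar>" for \<omega> k
  proof -
    have "running_max (Suc k) (fun_upd \<omega> (Suc k) y) = max (running_max k \<omega>) \<bar>y\<bar>" for y
      by (simp add: running_max_fun_upd)
    then show ?thesis
      using nn_integral_lyapunov_Qker[OF assms, of "running_max k \<omega>" "\<omega> k"]
        running_max_nonneg abs_le_running_max[of k k \<omega>] B
      by (simp add: B_def ennreal_mult lyapunov_pos less_imp_le)
  qed
  have "(\<lambda>\<omega>. ennreal (lyapunov (running_max k \<omega>) \<bar>\<omega> k\<bar>)) \<in> borel_measurable seq_space" for k
    unfolding lyapunov_def by measurable
  then have "(\<integral>\<^sup>+\<omega>. lyapunov (running_max k \<omega>) \<bar>\<omega> k\<bar> \<partial>chain_law (Qker \<sigma> cinf \<kappa> \<gamma>) w0 k)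
      \<le> ennreal B ^ k * lyapunov (running_max 0 (\<lambda>_. w0)) \<bar>w0\<bar>"
    using nn_integral_chain_law_le_power[OF measurable_Qker[OF lipschitz_on_continuous_on[OF lip]] _ drift]
    by simp
  then show ?thesis
    using B by (simp add: B_def ennreal_power ennreal_mult lyapunov_pos less_imp_le)
qed

section \<open>The interpolated path\<close>

lemma abs_interp_le_running_max:
  assumes "0 < \<gamma>" "0 \<le> t" "t \<le> T"
  shows "\<bar>interp \<gamma> \<omega> t\<bar> \<le> running_max (nat \<lceil>T / \<gamma>\<rceil>) \<omega>"
proof -
  define i where "i = nat \<lfloor>t / \<gamma>\<rfloor>"
  define j where "j = nat \<lceil>t / \<gamma>\<rceil>"
  define \<theta> where "\<theta> = t / \<gamma> - of_int \<lfloor>t / \<gamma>\<rfloor>"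
  define M where "M = running_max (nat \<lceil>T / \<gamma>\<rceil>) \<omega>"
  have \<theta>: "0 \<le> \<theta>" "\<theta> \<le> 1"
    unfolding \<theta>_def by linarith+
  have "t / \<gamma> \<le> T / \<gamma>"
    using assms by (intro divide_right_mono) auto
  then have "j \<le> nat \<lceil>T / \<gamma>\<rceil>"
    unfolding j_def by (intro nat_mono ceiling_mono)
  moreover have "i \<le> j"
    unfolding i_def j_def by (intro nat_mono floor_le_ceiling)
  ultimately have "\<bar>\<omega> i\<bar> \<le> M" "\<bar>\<omega> j\<bar> \<le> M"
    unfolding M_def by (auto intro: abs_le_running_max)
  moreover have "interp \<gamma> \<omega> t = (1 - \<theta>) * \<omega> i + \<theta> * \<omega> j"
    unfolding interp_def i_def j_def \<theta>_def by (simp add: algebra_simps)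
  ultimately have "\<bar>interp \<gamma> \<omega> t\<bar> \<le> (1 - \<theta>) * M + \<theta> * M"
    using \<theta> abs_triangle_ineq[of "(1 - \<theta>) * \<omega> i" "\<theta> * \<omega> j"]
      mult_left_mono[of "\<bar>\<omega> i\<bar>" M "1 - \<theta>"] mult_left_mono[of "\<bar>\<omega> j\<bar>" M \<theta>]
    by (simp add: abs_mult)
  then show ?thesis
    by (simp add: M_def algebra_simps)
qed

lemma SUP_interp_power4_le_lyapunov:
  assumes "0 < \<gamma>"
  shows "(SUP t\<in>{0..T}. ennreal (interp \<gamma> \<omega> t ^ 4))
    \<le> ennreal (lyapunov (running_max (nat \<lceil>T / \<gamma>\<rceil>) \<omega>) \<bar>\<omega> (nat \<lceil>T / \<gamma>\<rceil>)\<bar>)"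
proof (rule SUP_least)
  fix t assume "t \<in> {0..T}"
  then have "\<bar>interp \<gamma> \<omega> t\<bar> ^ 4 \<le> running_max (nat \<lceil>T / \<gamma>\<rceil>) \<omega> ^ 4"
    using assms by (intro power_mono abs_interp_le_running_max) auto
  then show "ennreal (interp \<gamma> \<omega> t ^ 4)
      \<le> ennreal (lyapunov (running_max (nat \<lceil>T / \<gamma>\<rceil>) \<omega>) \<bar>\<omega> (nat \<lceil>T / \<gamma>\<rceil>)\<bar>)"
    using lyapunov_lower[of "running_max (nat \<lceil>T / \<gamma>\<rceil>) \<omega>" "\<bar>\<omega> (nat \<lceil>T / \<gamma>\<rceil>)\<bar>"]
    by (intro ennreal_leI) (simp add: power_even_abs_numeral)
qed

lemma one_plus_power_ceiling_le_exp:
  fixes \<gamma> :: real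
  assumes "0 < \<gamma>" "\<gamma> \<le> \<gamma>bar" "0 \<le> K" "0 \<le> T"
  shows "(1 + \<gamma> * K) ^ nat \<lceil>T / \<gamma>\<rceil> \<le> exp (K * (T + \<gamma>bar))"
proof -
  have "real (nat \<lceil>T / \<gamma>\<rceil>) = of_int \<lceil>T / \<gamma>\<rceil>"
    using assms by simp
  then have "real (nat \<lceil>T / \<gamma>\<rceil>) * \<gamma> \<le> (T / \<gamma> + 1) * \<gamma>"
    using assms of_int_ceiling_le_add_one[of "T / \<gamma>"] by (intro mult_right_mono) auto
  also have "\<dots> \<le> T + \<gamma>bar"
    using assms by (simp add: field_simps)
  finally have N: "real (nat \<lceil>T / \<gamma>\<rceil>) * \<gamma> \<le> T + \<gamma>bar" .
  have "(1 + \<gamma> * K) ^ nat \<lceil>T / \<gamma>\<rceil> \<le> exp (\<gamma> * K) ^ nat \<lceil>T / \<gamma>\<rceil>"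
    using assms by (intro power_mono) (auto simp: exp_ge_add_one_self)
  also have "\<dots> = exp (real (nat \<lceil>T / \<gamma>\<rceil>) * \<gamma> * K)"
    by (simp add: exp_of_nat_mult[symmetric] mult.assoc)
  also have "\<dots> \<le> exp (K * (T + \<gamma>bar))"
    using mult_right_mono[OF N assms(3)] by (simp add: mult.commute)
  finally show ?thesis .
qed

lemma nn_integral_SUP_interp_power4_le:
  assumes "\<sigma> > 0" "0 < \<gamma>" "\<gamma> \<le> \<gamma>bar" "0 \<le> cinf"
    and lip: "L-lipschitz_on {0..} \<kappa>" and "\<kappa> 0 = 0" and "0 \<le> T"
  shows "(\<integral>\<^sup>+\<omega>. (SUP t\<in>{0..T}. ennreal (interp \<gamma> \<omega> t ^ 4))
      \<partial>chain_law (Qker \<sigma> cinf \<kappa> \<gamma>) w0 (nat \<lceil>T / \<gamma>\<rceil>))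
    \<le> ennreal (exp (drift_const L cinf \<sigma> \<gamma>bar * (T + \<gamma>bar)) * lyapunov \<bar>w0\<bar> \<bar>w0\<bar>)"
proof -
  have "0 \<le> drift_const L cinf \<sigma> \<gamma>bar"
    using assms lipschitz_on_nonneg[OF lip] by (simp add: drift_const_nonneg)
  then have "(1 + \<gamma> * drift_const L cinf \<sigma> \<gamma>bar) ^ nat \<lceil>T / \<gamma>\<rceil> * lyapunov \<bar>w0\<bar> \<bar>w0\<bar>
      \<le> exp (drift_const L cinf \<sigma> \<gamma>bar * (T + \<gamma>bar)) * lyapunov \<bar>w0\<bar> \<bar>w0\<bar>"
    using assms by (intro mult_right_mono one_plus_power_ceiling_le_exp) (auto simp: lyapunov_pos less_imp_le)
  moreover have "(\<integral>\<^sup>+\<omega>. (SUP t\<in>{0..T}. ennreal (interp \<gamma> \<omega> t ^ 4))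
      \<partial>chain_law (Qker \<sigma> cinf \<kappa> \<gamma>) w0 (nat \<lceil>T / \<gamma>\<rceil>))
    \<le> ennreal ((1 + \<gamma> * drift_const L cinf \<sigma> \<gamma>bar) ^ nat \<lceil>T / \<gamma>\<rceil> * lyapunov \<bar>w0\<bar> \<bar>w0\<bar>)"
    using assms
    by (intro order_trans[OF nn_integral_mono nn_integral_lyapunov_chain_law] SUP_interp_power4_le_lyapunov)
  ultimately show ?thesis
    using ennreal_leI order_trans by blast
qed

theorem proposition16:
  fixes \<sigma> \<gamma>bar cinf L\<kappa> w0 :: real and \<kappa> :: "real \<Rightarrow> real" and \<gamma> :: "nat \<Rightarrow> real"
  assumes "\<sigma> > 0" and "\<gamma>bar > 0" and "cinf \<ge> 0"
    and "L\<kappa>-lipschitz_on {0..} \<kappa>" and "\<kappa> 0 = 0"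
    and "\<And>n. \<gamma> n > 0 \<and> \<gamma> n \<le> \<gamma>bar" and "\<gamma> \<longlonglongrightarrow> 0"
    and "w0 \<ge> 0"
  shows "\<forall>T\<ge>0. \<exists>C\<ge>0. \<forall>n.
    (\<integral>\<^sup>+ \<omega>. (SUP t\<in>{0..T}. ennreal ((interp (\<gamma> n) \<omega> t) ^ 4))
       \<partial>(chain_law (Qker \<sigma> cinf \<kappa> (\<gamma> n)) w0 (nat \<lceil>T / \<gamma> n\<rceil>))) \<le> ennreal C"
proof (intro allI impI)
  \<comment> \<open>The bound holds for every step size in \<open>(0, \<gamma>bar]\<close>.\<close>
  fix T :: real assume "0 \<le> T"
  define C where "C = exp (drift_const L\<kappa> cinf \<sigma> \<gamma>bar * (T + \<gamma>bar)) * lyapunov \<bar>w0\<bar> \<bar>w0\<bar>"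
  have "0 \<le> C"
    by (simp add: C_def lyapunov_pos less_imp_le)
  moreover have "(\<integral>\<^sup>+ \<omega>. (SUP t\<in>{0..T}. ennreal ((interp (\<gamma> n) \<omega> t) ^ 4))
       \<partial>(chain_law (Qker \<sigma> cinf \<kappa> (\<gamma> n)) w0 (nat \<lceil>T / \<gamma> n\<rceil>))) \<le> ennreal C" for n
    unfolding C_def using assms(1,3-5) assms(6)[of n] \<open>0 \<le> T\<close> by (intro nn_integral_SUP_interp_power4_le) auto
  ultimately show "\<exists>C\<ge>0. \<forall>n. (\<integral>\<^sup>+ \<omega>. (SUP t\<in>{0..T}. ennreal ((interp (\<gamma> n) \<omega> t) ^ 4))
       \<partial>(chain_law (Qker \<sigma> cinf \<kappa> (\<gamma> n)) w0 (nat \<lceil>T / \<gamma> n\<rceil>))) \<le> ennreal C"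
    by blast
qed

end
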